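(* Let $X$ be a fixed finite set, let $p \in (0,1)$ and $\delta_B \in (0,1)$. For a finite set $Y$, let $\mathcal M_Y(Y) = |X \cap Y_{\mathrm{sub}}|$, where $Y_{\mathrm{sub}} \subseteq Y$ includes each element of $Y$ independently with probability $p$. Set $$L = \frac{\left(\sqrt{\tfrac12\log\tfrac{2}{\delta_B}} + \sqrt{\tfrac12\log\tfrac{2}{\delta_B} + 16(1-p)\log\tfrac{4}{\delta_B}}\right)^2}{16(1-p)^2}.$$ If $|I| > L$, where $I = X\cap Y$, then $\mathcal M_Y$ provides $(\epsilon_B, \delta_B)$-differential privacy for $Y$, i.e. for every $Y'$ neighboring $Y$ and every set $W$ of outputs, $\Pr[\mathcal M_Y(Y)\in W] \le e^{\epsilon_B}\Pr[\mathcal M_Y(Y')\in W] + \delta_B$, where $$\epsilon_B = \frac{2\sqrt{t\log\frac{4}{\delta_B}} + 1}{t - \sqrt{t\log\frac{4}{\delta_B}}}, \qquad t = (1-p)|I| - \sqrt{\frac{|I|}{8}\log\frac{2}{\delta_B}}.$$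
   Context: $\log$ is the natural logarithm. Neighboring sets are in the bounded sense: $Y'$ is obtained from $Y$ by replacing exactly one element by another element (so $|Y'|=|Y|$); the set $X$ is held fixed. *)

theory Defs
  imports "HOL-Probability.Probability"
begin

definition subsample_pmf :: "real \<Rightarrow> 'a set \<Rightarrow> 'a set pmf" where
  "subsample_pmf p Y = map_pmf (\<lambda>f. {y \<in> Y. f y}) (Pi_pmf Y False (\<lambda>_. bernoulli_pmf p))"

definition mech_Y :: "'a set \<Rightarrow> real \<Rightarrow> 'a set \<Rightarrow> nat pmf" where
  "mech_Y X p Y = map_pmf (\<lambda>S. card (X \<inter> S)) (subsample_pmf p Y)"

definition neighbour_bounded :: "'a set \<Rightarrow> 'a set \<Rightarrow> bool" where
  "neighbour_bounded Y Y' \<longleftrightarrow> (\<exists>a b. a \<in> Y \<and> b \<notin> Y \<and> Y' = insert b (Y - {a}))"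

definition L_bound :: "real \<Rightarrow> real \<Rightarrow> real" where
  "L_bound p \<delta> =
     (sqrt (1/2 * ln (2/\<delta>)) + sqrt (1/2 * ln (2/\<delta>) + 16 * (1 - p) * ln (4/\<delta>)))^2
     / (16 * (1 - p)^2)"

definition t_param :: "real \<Rightarrow> real \<Rightarrow> nat \<Rightarrow> real" where
  "t_param p \<delta> n = (1 - p) * real n - sqrt (real n / 8 * ln (2/\<delta>))"

definition eps_B :: "real \<Rightarrow> real \<Rightarrow> nat \<Rightarrow> real" where
  "eps_B p \<delta> n = (let t = t_param p \<delta> n in
     (2 * sqrt (t * ln (4/\<delta>)) + 1) / (t - sqrt (t * ln (4/\<delta>))))"

end

theory Submission
  imports Defs
begin

(* The mechanism run on Y outputs a Binomial(n, p) variable with n = |X \<inter> Y|, and on a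
   neighbour Y' a Binomial(n', p) variable with n' \<in> {n - 1, n, n + 1}.  Adjacent binomial
   distributions have likelihood ratio (n - k) / (n (1 - p)) at k (up to an index shift), so the
   ratio is at most exp \<epsilon>_B unless the number n - k of dropped elements deviates from its mean
   n (1 - p) by a factor exp (\<plusminus>\<epsilon>_B).  Chernoff bounds give this exceptional event probability
   at most exp (- ln (4 / \<delta>_B)) = \<delta>_B / 4, because |I| > L makes
   n (1 - p) \<ge> t > ln (4 / \<delta>_B), and \<epsilon>_B is large enough that t \<epsilon>_B\<^sup>2 dominates the Chernoff
   exponent. *)

lemma measure_pmf_le_mult_plus_exceptional:
  fixes P Q :: "'a pmf"
  assumes "0 \<le> c" and pointwise: "\<And>x. x \<notin> B \<Longrightarrow> pmf P x \<le> c * pmf Q x"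
  shows "measure_pmf.prob P W \<le> c * measure_pmf.prob Q W + measure_pmf.prob P B"
proof -
  have "measure_pmf.prob P (W - B) = infsetsum (pmf P) (W - B)"
    by (rule measure_pmf_conv_infsetsum)
  also have "\<dots> \<le> infsetsum (\<lambda>x. c * pmf Q x) (W - B)"
    by (intro infsetsum_mono pointwise abs_summable_on_cmult_right) auto
  also have "\<dots> = c * measure_pmf.prob Q (W - B)"
    by (simp add: infsetsum_cmult_right pmf_abs_summable measure_pmf_conv_infsetsum)
  also have "\<dots> \<le> c * measure_pmf.prob Q W"
    by (intro mult_left_mono measure_pmf.finite_measure_mono assms) auto
  finally have "measure_pmf.prob P (W - B) \<le> c * measure_pmf.prob Q W" .
  moreover have "measure_pmf.prob P W \<le> measure_pmf.prob P ((W - B) \<union> B)"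
    by (rule measure_pmf.finite_measure_mono) auto
  moreover have "\<dots> \<le> measure_pmf.prob P (W - B) + measure_pmf.prob P B"
    by (rule measure_Un_le) auto
  ultimately show ?thesis by linarith
qed

lemma pmf_binomial_Suc:
  assumes "p \<in> {0..1}"
  shows "real (Suc n - k) * pmf (binomial_pmf (Suc n) p) k
           = real (Suc n) * (1 - p) * pmf (binomial_pmf n p) k"
proof (cases "k \<le> n")
  case True
  have pmf: "pmf (binomial_pmf m p) k = real (m choose k) * p ^ k * (1 - p) ^ (m - k)" for m
    using assms by (intro pmf_binomial) auto
  have choose: "real (Suc n - k) * real (Suc n choose k) = real (Suc n) * real (n choose k)"
    using binomial_absorb_comp[of "Suc n" k] by (metis diff_Suc_1 of_nat_mult)
  have "(1 - p) ^ (Suc n - k) = (1 - p) * (1 - p) ^ (n - k)"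
    using True by (simp add: Suc_diff_le)
  then show ?thesis
    unfolding pmf by (simp only: choose mult.assoc[symmetric]) (simp only: mult_ac)
next
  case False
  then show ?thesis
    using assms by (auto simp: Suc_diff_le)
qed

lemma binomial_failures_mgf:
  assumes "p \<in> {0..1}"
  shows "(\<Sum>k\<le>n. pmf (binomial_pmf n p) k * exp (s * real (n - k))) = (p + (1 - p) * exp s) ^ n"
proof -
  have "exp (s * real m) = exp s ^ m" for m
    by (simp add: exp_of_nat_mult[symmetric] mult.commute)
  then have "(\<Sum>k\<le>n. pmf (binomial_pmf n p) k * exp (s * real (n - k)))
      = (\<Sum>k\<le>n. real (n choose k) * p ^ k * ((1 - p) * exp s) ^ (n - k))"
    using assms by (simp add: power_mult_distrib mult.assoc del: of_nat_diff)
  also have "\<dots> = (p + (1 - p) * exp s) ^ n"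
    by (simp add: binomial_ring atLeast0AtMost)
  finally show ?thesis .
qed

(* The exponent s may be negative, which yields the lower tail. *)
lemma binomial_failures_chernoff:
  assumes p: "p \<in> {0..1}"
    and tail: "\<And>k. k \<in> B \<Longrightarrow> k \<le> n \<Longrightarrow> s * a \<le> s * real (n - k)"
  shows "measure_pmf.prob (binomial_pmf n p) B \<le> exp (real n * (1 - p) * (exp s - 1) - s * a)"
proof -
  let ?P = "binomial_pmf n p"
  have "set_pmf ?P \<subseteq> {..n}"
    using p by (auto simp: set_pmf_binomial_eq)
  then have "B \<inter> set_pmf ?P = (B \<inter> {..n}) \<inter> set_pmf ?P"
    by blast
  then have "measure_pmf.prob ?P B = measure_pmf.prob ?P (B \<inter> {..n})"
    by (metis measure_Int_set_pmf)
  also have "\<dots> = (\<Sum>k\<in>B \<inter> {..n}. pmf ?P k)"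
    by (simp add: measure_measure_pmf_finite)
  also have "\<dots> \<le> (\<Sum>k\<in>B \<inter> {..n}. pmf ?P k * exp (s * real (n - k) - s * a))"
    using tail by (intro sum_mono) (simp add: mult_le_cancel_left1)
  also have "\<dots> \<le> (\<Sum>k\<le>n. pmf ?P k * exp (s * real (n - k) - s * a))"
    by (intro sum_mono2) auto
  also have "\<dots> = exp (- s * a) * (\<Sum>k\<le>n. pmf ?P k * exp (s * real (n - k)))"
    using exp_add[of "- s * a"] by (simp add: sum_distrib_left mult.left_commute)
  also have "\<dots> = exp (- s * a) * (p + (1 - p) * exp s) ^ n"
    by (simp only: binomial_failures_mgf[OF p])
  also have "\<dots> \<le> exp (- s * a) * exp ((1 - p) * (exp s - 1)) ^ n"
    using p exp_ge_add_one_self[of "(1 - p) * (exp s - 1)"]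
    by (intro mult_left_mono power_mono add_nonneg_nonneg mult_nonneg_nonneg)
       (auto simp: algebra_simps)
  also have "\<dots> = exp (real n * (1 - p) * (exp s - 1) - s * a)"
    by (simp add: exp_of_nat_mult[symmetric] exp_add[symmetric] algebra_simps)
  finally show ?thesis .
qed

lemma one_minus_one_plus_mult_exp_neg_ge:
  fixes e :: real
  assumes "0 \<le> e"
  shows "e^2 / (2 + 2 * e + e^2) \<le> 1 - (1 + e) * exp (- e)"
proof -
  have taylor: "1 + e + e^2/2 \<le> exp e"
    by (rule exp_lower_Taylor_quadratic) fact
  have pos: "0 < 1 + e + e^2/2"
    using assms by (simp add: add_pos_nonneg)
  have "(1 + e) * exp (- e) = (1 + e) / exp e"
    by (simp add: exp_minus field_simps)
  also have "\<dots> \<le> (1 + e) / (1 + e + e^2/2)"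
    using taylor pos assms by (intro divide_left_mono) auto
  also have "\<dots> = 1 - e^2 / (2 + 2 * e + e^2)"
    using pos by (simp add: field_simps)
  finally show ?thesis by simp
qed

lemma one_plus_mult_exp_ge:
  fixes e :: real
  assumes "0 \<le> e"
  shows "e^2 / 2 \<le> 1 + (e - 1) * exp e"
proof -
  let ?f = "\<lambda>x::real. 1 + (x - 1) * exp x - x^2 / 2"
  have "?f 0 \<le> ?f e"
  proof (rule DERIV_nonneg_imp_nondecreasing[OF assms])
    fix x :: real assume "0 \<le> x"
    have "(?f has_real_derivative x * (exp x - 1)) (at x)"
      by (auto intro!: derivative_eq_intros simp: algebra_simps)
    moreover have "0 \<le> x * (exp x - 1)"
      using \<open>0 \<le> x\<close> by simp
    ultimately show "\<exists>y. (?f has_real_derivative y) (at x) \<and> 0 \<le> y"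
      by blast
  qed
  then show ?thesis by simp
qed

(* Outside B the likelihood ratio \<mu> / (Suc m - k) given by pmf_binomial_Suc is at most exp e;
   B is a lower tail of the number of failures. *)
lemma binomial_pmf_dp_Suc_left:
  fixes m :: nat and p e l :: real
  assumes p: "0 < p" "p < 1" and e: "0 < e"
    and quadratic: "l * (2 + 2 * e + e^2) \<le> real (Suc m) * (1 - p) * e^2"
  shows "measure_pmf.prob (binomial_pmf (Suc m) p) W
           \<le> exp e * measure_pmf.prob (binomial_pmf m p) W + exp (- l)"
proof -
  let ?P = "binomial_pmf (Suc m) p" and ?Q = "binomial_pmf m p"
  define \<mu> where "\<mu> = real (Suc m) * (1 - p)"
  define B where "B = {k. real (Suc m - k) * exp e < \<mu>}"
  have p01: "p \<in> {0..1}" and \<mu>_pos: "0 < \<mu>"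
    using p by (auto simp: \<mu>_def)
  have "measure_pmf.prob ?P W \<le> exp e * measure_pmf.prob ?Q W + measure_pmf.prob ?P B"
  proof (rule measure_pmf_le_mult_plus_exceptional)
    fix k assume "k \<notin> B"
    then have good: "\<mu> \<le> real (Suc m - k) * exp e"
      by (simp add: B_def)
    then have pos: "0 < real (Suc m - k)"
      using \<mu>_pos by (cases "Suc m - k") auto
    have "real (Suc m - k) * pmf ?P k = \<mu> * pmf ?Q k"
      using pmf_binomial_Suc[OF p01] by (simp add: \<mu>_def)
    also have "\<dots> \<le> real (Suc m - k) * (exp e * pmf ?Q k)"
      using good by (simp add: mult_right_mono mult.assoc[symmetric])
    finally show "pmf ?P k \<le> exp e * pmf ?Q k"
      using pos by (rule mult_left_le_imp_le)
  qed simp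
  also have "measure_pmf.prob ?P B \<le> exp (\<mu> * (exp (- e) - 1) - (- e) * (\<mu> * exp (- e)))"
  proof (unfold \<mu>_def, rule binomial_failures_chernoff[OF p01])
    fix k assume "k \<in> B"
    then have "real (Suc m - k) \<le> \<mu> * exp (- e)"
      by (simp add: B_def exp_minus field_simps)
    then show "- e * (real (Suc m) * (1 - p) * exp (- e)) \<le> - e * real (Suc m - k)"
      using e by (simp add: \<mu>_def)
  qed
  also have "\<dots> = exp (- (\<mu> * (1 - (1 + e) * exp (- e))))"
    by (simp add: algebra_simps)
  also have "\<dots> \<le> exp (- l)"
  proof -
    have "l \<le> \<mu> * (e^2 / (2 + 2 * e + e^2))"
      using quadratic e by (simp add: \<mu>_def field_simps add_pos_nonneg)
    also have "\<dots> \<le> \<mu> * (1 - (1 + e) * exp (- e))"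
      using e \<mu>_pos by (intro mult_left_mono one_minus_one_plus_mult_exp_neg_ge) auto
    finally show ?thesis by simp
  qed
  finally show ?thesis by simp
qed

lemma binomial_pmf_dp_Suc_right:
  fixes n :: nat and p e l :: real
  assumes p: "0 < p" "p < 1" and e: "0 < e" and l: "1 \<le> l"
    and quadratic: "l * (2 + 2 * e + e^2) \<le> real n * (1 - p) * e^2"
  shows "measure_pmf.prob (binomial_pmf n p) W
           \<le> exp e * measure_pmf.prob (binomial_pmf (Suc n) p) W + exp (- l)"
proof -
  let ?P = "binomial_pmf n p" and ?Q = "binomial_pmf (Suc n) p"
  define \<mu> where "\<mu> = real n * (1 - p)"
  define B where "B = {k. real (Suc n) * (1 - p) * exp e < real (Suc n - k)}"
  have p01: "p \<in> {0..1}" and q_pos: "0 < real (Suc n) * (1 - p)"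
    using p by auto
  have "measure_pmf.prob ?P W \<le> exp e * measure_pmf.prob ?Q W + measure_pmf.prob ?P B"
  proof (rule measure_pmf_le_mult_plus_exceptional)
    fix k assume "k \<notin> B"
    then have good: "real (Suc n - k) \<le> real (Suc n) * (1 - p) * exp e"
      by (simp add: B_def)
    have "real (Suc n) * (1 - p) * pmf ?P k = real (Suc n - k) * pmf ?Q k"
      using pmf_binomial_Suc[OF p01] by simp
    also have "\<dots> \<le> real (Suc n) * (1 - p) * (exp e * pmf ?Q k)"
      using good by (simp add: mult_right_mono mult.assoc[symmetric])
    finally show "pmf ?P k \<le> exp e * pmf ?Q k"
      using q_pos by (rule mult_left_le_imp_le)
  qed simp
  also have "measure_pmf.prob ?P B \<le> exp (\<mu> * (exp e - 1) - e * (\<mu> * exp e - 1))"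
  proof (unfold \<mu>_def, rule binomial_failures_chernoff[OF p01])
    fix k assume "k \<in> B" "k \<le> n"
    have "real (Suc n) * (1 - p) * exp e < real (Suc n - k)"
      using \<open>k \<in> B\<close> by (simp only: B_def mem_Collect_eq)
    moreover have "real n * (1 - p) * exp e \<le> real (Suc n) * (1 - p) * exp e"
      using p by (intro mult_right_mono) auto
    moreover have "real (Suc n - k) = real (n - k) + 1"
      using \<open>k \<le> n\<close> by (simp add: Suc_diff_le)
    ultimately have "real n * (1 - p) * exp e - 1 \<le> real (n - k)"
      by linarith
    then show "e * (real n * (1 - p) * exp e - 1) \<le> e * real (n - k)"
      using e by simp
  qed
  also have "\<dots> = exp (e - \<mu> * (1 + (e - 1) * exp e))"
    by (simp add: algebra_simps)
  also have "\<dots> \<le> exp (- l)"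
  proof -
    have "e \<le> l * e" and "0 \<le> l * e^2"
      using e l by auto
    moreover have "l * (2 + 2 * e + e^2) / 2 = l + l * e + l * e^2 / 2"
      by (simp add: algebra_simps)
    ultimately have "l + e \<le> l * (2 + 2 * e + e^2) / 2"
      by linarith
    also have "\<dots> \<le> \<mu> * (e^2 / 2)"
      using divide_right_mono[OF quadratic, of 2] by (simp add: \<mu>_def)
    also have "\<dots> \<le> \<mu> * (1 + (e - 1) * exp e)"
      using e p by (intro mult_left_mono one_plus_mult_exp_ge) (auto simp: \<mu>_def)
    finally show ?thesis by simp
  qed
  finally show ?thesis by simp
qed

lemma binomial_pmf_dp_neighbour:
  fixes n n' :: nat and p e l :: real
  assumes p: "0 < p" "p < 1" and e: "0 < e" and l: "1 \<le> l"
    and quadratic: "l * (2 + 2 * e + e^2) \<le> real n * (1 - p) * e^2"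
    and neighbour: "n' = n \<or> Suc n' = n \<or> n' = Suc n"
  shows "measure_pmf.prob (binomial_pmf n p) W
           \<le> exp e * measure_pmf.prob (binomial_pmf n' p) W + exp (- l)"
  using neighbour
proof (elim disjE)
  assume "n' = n"
  have "measure_pmf.prob (binomial_pmf n p) W \<le> exp e * measure_pmf.prob (binomial_pmf n p) W"
    using e by (simp add: mult_le_cancel_right1)
  then show ?thesis
    using \<open>n' = n\<close> by (simp add: add_increasing2)
next
  assume "Suc n' = n"
  then show ?thesis
    using binomial_pmf_dp_Suc_left[OF p e] quadratic by blast
next
  assume "n' = Suc n"
  then show ?thesis
    using binomial_pmf_dp_Suc_right[OF p e l quadratic] by blast
qed

(* This inequality is the only property of \<epsilon>_B that the privacy argument uses. *)
lemma eps_quadratic_bound: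
  fixes t l :: real
  defines "s \<equiv> sqrt (t * l)"
  defines "e \<equiv> (2 * s + 1) / (t - s)"
  assumes "0 < l" and "l < t"
  shows "0 < e" and "l * (2 + 2 * e + e^2) \<le> t * e^2"
proof -
  have s2: "s^2 = t * l" and s0: "0 < s"
    using assms by (auto simp: s_def)
  have "t * l < t * t"
    using assms by simp
  then have "s < sqrt (t * t)"
    unfolding s_def by (rule real_sqrt_less_mono)
  then have "s < t"
    using assms by simp
  then have es: "e * (t - s) = 2 * s + 1"
    by (simp add: e_def)
  show e0: "0 < e"
    using \<open>s < t\<close> s0 by (simp add: e_def)
  have "t * (t * e^2 - l * (2 + 2 * e + e^2)) = e * (2 * t * s) + (e * t + e * s) - 2 * s^2"
    using s2 es by algebra
  moreover have "2 * s^2 \<le> e * (2 * t * s)"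
  proof -
    have "2 * s^2 \<le> (2 * s + 1) * (2 * s)"
      using s0 by (simp add: power2_eq_square algebra_simps)
    also have "\<dots> = e * (t - s) * (2 * s)"
      by (simp add: es)
    also have "\<dots> \<le> e * (2 * t * s)"
      using e0 s0 by (simp add: algebra_simps)
    finally show ?thesis .
  qed
  moreover have "0 < e * t + e * s"
    using e0 s0 \<open>s < t\<close> by (simp add: add_pos_pos)
  ultimately have "0 \<le> t * (t * e^2 - l * (2 + 2 * e + e^2))"
    by linarith
  then show "l * (2 + 2 * e + e^2) \<le> t * e^2"
    using assms by (simp add: zero_le_mult_iff)
qed

lemma less_quadratic_beyond_root:
  fixes a q l x :: real
  assumes "0 < q" and "0 \<le> a" and "0 \<le> l"
    and "(a + sqrt (a^2 + 4 * q * l)) / (2 * q) < x"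
  shows "l < x * (q * x - a)"
proof -
  define R where "R = sqrt (a^2 + 4 * q * l)"
  define r where "r = (a + R) / (2 * q)"
  have R2: "R^2 = a^2 + 4 * q * l" and "a \<le> R"
    using assms by (auto simp: R_def intro: real_le_rsqrt)
  have qr: "q * r - a = (R - a) / 2"
    using assms by (simp add: r_def field_simps)
  then have "r * (q * r - a) = (R^2 - a^2) / (4 * q)"
    using assms by (simp add: r_def field_simps power2_eq_square)
  also have "\<dots> = l"
    using R2 assms by simp
  finally have root: "r * (q * r - a) = l" .
  have "r < x"
    using assms by (simp add: r_def R_def)
  moreover have "0 \<le> r" and "0 \<le> q * r - a"
    using assms \<open>a \<le> R\<close> qr by (auto simp: r_def)
  ultimately have "r * (q * r - a) < x * (q * x - a)"
    using assms by (intro mult_strict_mono) auto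
  then show ?thesis
    using root by simp
qed

(* With q = 1 - p, a = sqrt (ln (2 / \<delta>) / 8) and x = sqrt n we have t_param = x (q x - a),
   and L_bound is the square of the positive root of x (q x - a) = ln (4 / \<delta>). *)
lemma L_bound_eq_root_sq:
  "L_bound p \<delta> =
     ((sqrt (ln (2/\<delta>) / 8) + sqrt (ln (2/\<delta>) / 8 + 4 * (1 - p) * ln (4/\<delta>))) / (2 * (1 - p)))^2"
proof -
  define A where "A = sqrt (ln (2/\<delta>) / 8)"
  define B where "B = sqrt (ln (2/\<delta>) / 8 + 4 * (1 - p) * ln (4/\<delta>))"
  have sqrt4: "sqrt (4 * z) = 2 * sqrt z" for z :: real
    by (simp add: real_sqrt_mult)
  have "sqrt (1/2 * ln (2/\<delta>)) = 2 * A"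
    using sqrt4[of "ln (2/\<delta>) / 8"] by (simp add: A_def)
  moreover have "sqrt (1/2 * ln (2/\<delta>) + 16 * (1 - p) * ln (4/\<delta>)) = 2 * B"
    using sqrt4[of "ln (2/\<delta>) / 8 + 4 * (1 - p) * ln (4/\<delta>)"] by (simp add: B_def algebra_simps)
  ultimately have "L_bound p \<delta> = (2 * (A + B))^2 / (16 * (1 - p)^2)"
    unfolding L_bound_def by simp
  also have "\<dots> = ((A + B) / (2 * (1 - p)))^2"
    by (simp only: power_divide power_mult_distrib) simp
  finally show ?thesis
    by (simp add: A_def B_def)
qed

lemma t_param_eq:
  "t_param p \<delta> n = sqrt (real n) * ((1 - p) * sqrt (real n) - sqrt (ln (2/\<delta>) / 8))"
  unfolding t_param_def by (simp add: real_sqrt_mult[symmetric] algebra_simps)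

lemma ln_less_t_param:
  assumes "0 < p" "p < 1" and "0 < \<delta>" "\<delta> < 1" and "L_bound p \<delta> < real n"
  shows "ln (4 / \<delta>) < t_param p \<delta> n"
proof -
  define a where "a = sqrt (ln (2/\<delta>) / 8)"
  have "0 \<le> ln (2/\<delta>)" and "0 \<le> ln (4/\<delta>)"
    using assms by simp_all
  then have a: "0 \<le> a" "a^2 = ln (2/\<delta>) / 8"
    by (simp_all add: a_def)
  define r where "r = (a + sqrt (a^2 + 4 * (1 - p) * ln (4/\<delta>))) / (2 * (1 - p))"
  have "r^2 < real n"
    using assms L_bound_eq_root_sq[of p \<delta>] by (simp add: r_def a a_def)
  then have "r < sqrt (real n)"
    by (rule real_less_rsqrt)
  have "ln (4/\<delta>) < sqrt (real n) * ((1 - p) * sqrt (real n) - a)"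
    by (rule less_quadratic_beyond_root)
       (use assms a(1) \<open>0 \<le> ln (4/\<delta>)\<close> \<open>r < sqrt (real n)\<close> in \<open>simp_all add: r_def\<close>)
  then show ?thesis
    by (simp add: t_param_eq a_def)
qed

lemma one_le_ln_4_div:
  fixes \<delta> :: real
  assumes "0 < \<delta>" "\<delta> < 1"
  shows "1 \<le> ln (4 / \<delta>)"
proof -
  have "exp 1 \<le> (4::real)"
    using exp_le by simp
  also have "4 \<le> 4 / \<delta>"
    using assms by (simp add: field_simps)
  finally show ?thesis
    using assms by (simp add: ln_ge_iff)
qed

lemma card_Int_neighbour_bounded:
  assumes "finite Y" and "neighbour_bounded Y Y'"
  shows "card (X \<inter> Y') = card (X \<inter> Y) \<or> Suc (card (X \<inter> Y')) = card (X \<inter> Y)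
           \<or> card (X \<inter> Y') = Suc (card (X \<inter> Y))"
proof -
  obtain a b where ab: "a \<in> Y" "b \<notin> Y" "Y' = insert b (Y - {a})"
    using assms(2) unfolding neighbour_bounded_def by blast
  have fin: "finite (X \<inter> Y - {a})"
    using assms(1) by simp
  have "X \<inter> Y' = (if b \<in> X then insert b (X \<inter> Y - {a}) else X \<inter> Y - {a})"
    using ab by auto
  then have "card (X \<inter> Y') = card (X \<inter> Y - {a}) + (if b \<in> X then 1 else 0)"
    using fin ab by simp
  moreover have "card (X \<inter> Y) = card (X \<inter> Y - {a}) + (if a \<in> X then 1 else 0)"
  proof (cases "a \<in> X")
    case True
    then show ?thesis
      using assms(1) ab(1) card.remove[of "X \<inter> Y" a] by simp
  next
    case False
    then have "X \<inter> Y - {a} = X \<inter> Y"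
      by blast
    then show ?thesis
      using False by simp
  qed
  ultimately show ?thesis
    by (simp split: if_splits)
qed

lemma mech_Y_eq_binomial_pmf:
  assumes "finite Y" and "p \<in> {0..1}"
  shows "mech_Y X p Y = binomial_pmf (card (X \<inter> Y)) p"
proof -
  let ?bits = "Pi_pmf Y False (\<lambda>_. bernoulli_pmf p)"
  have "mech_Y X p Y = map_pmf (\<lambda>f. card {x \<in> X \<inter> Y. f x})
      (map_pmf (\<lambda>f x. if x \<in> X \<inter> Y then f x else False) ?bits)"
    unfolding mech_Y_def subsample_pmf_def pmf.map_comp o_def
    by (intro pmf.map_cong refl arg_cong[where f = card]) auto
  also have "map_pmf (\<lambda>f x. if x \<in> X \<inter> Y then f x else False) ?bits
      = Pi_pmf (X \<inter> Y) False (\<lambda>_. bernoulli_pmf p)"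
    using assms by (intro Pi_pmf_subset[symmetric]) auto
  also have "map_pmf (\<lambda>f. card {x \<in> X \<inter> Y. f x}) \<dots> = binomial_pmf (card (X \<inter> Y)) p"
    using assms by (intro binomial_pmf_altdef'[symmetric]) auto
  finally show ?thesis .
qed

theorem theorem2:
  fixes X Y :: "'a set" and p \<delta> :: real
  assumes "finite X" and "finite Y"
    and "0 < p" "p < 1" and "0 < \<delta>" "\<delta> < 1"
    and "real (card (X \<inter> Y)) > L_bound p \<delta>"
  shows "\<forall>Y' W. neighbour_bounded Y Y' \<longrightarrow>
           measure_pmf.prob (mech_Y X p Y) W
             \<le> exp (eps_B p \<delta> (card (X \<inter> Y))) * measure_pmf.prob (mech_Y X p Y') W + \<delta>"
proof (intro allI impI)
  fix Y' W assume neighbour: "neighbour_bounded Y Y'"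
  define n where "n = card (X \<inter> Y)"
  define l where "l = ln (4 / \<delta>)"
  define t where "t = t_param p \<delta> n"
  define e where "e = eps_B p \<delta> n"
  have "l < t" and "1 \<le> l"
    using assms by (simp_all add: l_def t_def n_def ln_less_t_param one_le_ln_4_div)
  then have "0 < e" and "l * (2 + 2 * e + e^2) \<le> t * e^2"
    using eps_quadratic_bound[of l t] by (simp_all add: e_def eps_B_def Let_def t_def l_def)
  moreover have "t \<le> real n * (1 - p)"
    using assms by (simp add: t_def t_param_def)
  ultimately have "l * (2 + 2 * e + e^2) \<le> real n * (1 - p) * e^2"
    by (meson mult_right_mono order_trans zero_le_power2)
  then have "measure_pmf.prob (binomial_pmf n p) W
               \<le> exp e * measure_pmf.prob (binomial_pmf (card (X \<inter> Y')) p) W + exp (- l)"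
    using assms \<open>0 < e\<close> \<open>1 \<le> l\<close> card_Int_neighbour_bounded[OF \<open>finite Y\<close> neighbour, of X]
    by (intro binomial_pmf_dp_neighbour) (auto simp: n_def)
  moreover have "exp (- l) \<le> \<delta>"
    using assms by (simp add: l_def exp_minus)
  moreover have "finite Y'"
    using neighbour \<open>finite Y\<close> by (auto simp: neighbour_bounded_def)
  ultimately show "measure_pmf.prob (mech_Y X p Y) W
      \<le> exp (eps_B p \<delta> (card (X \<inter> Y))) * measure_pmf.prob (mech_Y X p Y') W + \<delta>"
    using assms by (simp add: mech_Y_eq_binomial_pmf e_def n_def)
qed

end
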